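(* Let $m\ge1$, $k\ge 1$, and let $p_1,\dots,p_m$ be probabilities summing to $1$; for a word $S$ on $[m]$ let $E(S)$ be the expected number of independent rolls of a die showing face $j$ with probability $p_j$ until $S$ first appears as a block of consecutive outcomes. (i) Suppose all $p_j>0$, and let $p=\min\{p_1,\dots,p_m\}=p_i$. Then \[ \max\{E(S): S\in[m]^k\} = p^{-1}+p^{-2}+\cdots+p^{-k} = \frac{1-p^k}{(1-p)p^k}, \] and the maximum is attained by $S=i^k$ (the run of $k$ copies of $i$). (ii) If $m>1$ and $p_1=\cdots=p_m$, then $\min\{E(S):S\in[m]^k\}=m^k$, and this minimum is attained by every $S\in[m]^k$ whose only overlap is $S$ itself, for example any word consisting of exactly two maximal runs of letters.
   Context: An overlap of $S$ is a nonempty word that is both a prefix and a suffix of $S$ (including $S$ itself). $[m]^k$ is the set of words of length $k$ on $[m]=\{1,\dots,m\}$. *)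

theory Defs
  imports "HOL-Probability.Probability" "HOL-Library.Sublist"
begin

text \<open>Number of rolls (outcomes omega!!0, omega!!1, ...) until the word S first appears
  as a block of consecutive outcomes; infinity if it never appears.\<close>
definition waiting_time :: "nat list \<Rightarrow> nat stream \<Rightarrow> ennreal" where
  "waiting_time S \<omega> =
     (if \<exists>n. length S \<le> n \<and> stake (length S) (sdrop (n - length S) \<omega>) = S
      then of_nat (LEAST n. length S \<le> n \<and> stake (length S) (sdrop (n - length S) \<omega>) = S)
      else \<infinity>)"

definition expected_wait :: "nat pmf \<Rightarrow> nat list \<Rightarrow> ennreal" where
  "expected_wait D S = (\<integral>\<^sup>+ \<omega>. waiting_time S \<omega> \<partial>(stream_space (measure_pmf D)))"

definition words :: "nat \<Rightarrow> nat \<Rightarrow> nat list set" where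
  "words m k = {S. length S = k \<and> set S \<subseteq> {1..m}}"

definition overlaps :: "'a list \<Rightarrow> 'a list set" where
  "overlaps S = {w. w \<noteq> [] \<and> prefix w S \<and> suffix w S}"

end

(*
  Everything rests on Conway's formula E(S) = sum of 1/P(w) over the overlaps w of S,
  where P(w) is the probability of rolling the word w.  Let W be the waiting time and k the
  length of S.  "W > n and rolls n+1..n+k spell S" happens exactly when W = n + |w| for an
  overlap w and the next k - |w| rolls spell the rest of S: the rolls shared by the window
  and the first occurrence form the overlap.  Since disjoint blocks of rolls are independent,
  summing over n gives E(S) P(S) = P(W < oo) * sum_w P(S with prefix w removed), and E(S) < oo
  forces P(W < oo) = 1.

  For (i), P(w) >= p^|w| and the overlap lengths are distinct numbers in {1..k}, all of which
  occur for the run i^k.  For (ii), 1/P(w) = m^|w| and S is always its own overlap, with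
  equality exactly when it is the only one.
*)
theory Submission
  imports Defs
begin

abbreviation rolls :: "'a pmf \<Rightarrow> 'a stream measure" where
  "rolls D \<equiv> stream_space (measure_pmf D)"

abbreviation word_prob :: "'a pmf \<Rightarrow> 'a list \<Rightarrow> real" where
  "word_prob D ys \<equiv> prod_list (map (pmf D) ys)"

section \<open>Blocks of independent rolls\<close>

lemma prob_space_rolls: "prob_space (rolls D)"
  by (rule prob_space.prob_space_stream_space) (rule prob_space_measure_pmf)

(* The measurability prover normalises rolls D to the stream space over the count space,
   so measurability facts are stated for the latter. *)
lemma borel_measurable_stake [measurable]:
  fixes f :: "'a::countable list \<Rightarrow> ennreal"
  shows "(\<lambda>\<omega>. f (stake n \<omega>)) \<in> borel_measurable (stream_space (count_space UNIV))"
  by (rule measurable_compose[OF measurable_stake]) simp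

lemma sets_rolls: "sets (rolls D) = sets (stream_space (count_space UNIV))"
  by (rule sets_stream_space_cong) simp

lemma nn_integral_stake_sdrop:
  fixes D :: "'a::countable pmf" and f :: "'a list \<Rightarrow> ennreal"
  assumes g [measurable]: "g \<in> borel_measurable (rolls D)"
  shows "(\<integral>\<^sup>+\<omega>. f (stake n \<omega>) * g (sdrop n \<omega>) \<partial>rolls D)
       = (\<integral>\<^sup>+\<omega>. f (stake n \<omega>) \<partial>rolls D) * (\<integral>\<^sup>+\<omega>. g \<omega> \<partial>rolls D)"
proof (induction n arbitrary: f)
  case 0
  interpret prob_space "rolls D"
    by (rule prob_space_rolls)
  show ?case
    by (simp add: nn_integral_cmult emeasure_space_1)
next
  case (Suc n)
  have [measurable]: "(\<lambda>\<omega>. f (stake n \<omega>) * g (sdrop n \<omega>)) \<in> borel_measurable (rolls D)" for f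
    by measurable
  have "(\<integral>\<^sup>+\<omega>. f (stake (Suc n) \<omega>) * g (sdrop (Suc n) \<omega>) \<partial>rolls D)
      = (\<integral>\<^sup>+x. \<integral>\<^sup>+\<omega>. f (x # stake n \<omega>) * g (sdrop n \<omega>) \<partial>rolls D \<partial>measure_pmf D)"
    by (subst prob_space.nn_integral_stream_space[OF prob_space_measure_pmf]) simp_all
  also have "\<dots> = (\<integral>\<^sup>+x. \<integral>\<^sup>+\<omega>. f (x # stake n \<omega>) \<partial>rolls D \<partial>measure_pmf D)
      * (\<integral>\<^sup>+\<omega>. g \<omega> \<partial>rolls D)"
    using Suc.IH[of "\<lambda>xs. f (_ # xs)"] by (simp add: nn_integral_multc)
  also have "\<dots> = (\<integral>\<^sup>+\<omega>. f (stake (Suc n) \<omega>) \<partial>rolls D)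
      * (\<integral>\<^sup>+\<omega>. g \<omega> \<partial>rolls D)"
    by (subst (2) prob_space.nn_integral_stream_space[OF prob_space_measure_pmf]) simp_all
  finally show ?case .
qed

lemma word_prob_nonneg: "0 \<le> word_prob D ys"
  by (induction ys) auto

lemma word_prob_pos: "(\<forall>x\<in>set ys. 0 < pmf D x) \<Longrightarrow> 0 < word_prob D ys"
  by (induction ys) auto

lemma nn_integral_stake_eq:
  fixes D :: "'a::countable pmf"
  shows "(\<integral>\<^sup>+\<omega>. of_bool (stake (length ys) \<omega> = ys) \<partial>rolls D)
       = ennreal (word_prob D ys)"
proof (induction ys)
  case Nil
  then show ?case
    using prob_space.emeasure_space_1[OF prob_space_rolls] by simp
next
  case (Cons y ys)
  have "(\<integral>\<^sup>+\<omega>. of_bool (stake (length (y # ys)) \<omega> = y # ys) \<partial>rolls D)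
      = (\<integral>\<^sup>+x. indicator {y} x * ennreal (word_prob D ys) \<partial>measure_pmf D)"
    by (subst prob_space.nn_integral_stream_space[OF prob_space_measure_pmf])
       (simp_all add: of_bool_conj nn_integral_cmult Cons.IH mult.commute indicator_def)
  also have "\<dots> = ennreal (word_prob D (y # ys))"
    by (simp add: nn_integral_multc ennreal_mult' emeasure_pmf_single)
  finally show ?case .
qed

section \<open>Occurrences and the waiting time\<close>

lemma suffix_iff_drop:
  "suffix xs ys \<longleftrightarrow> length xs \<le> length ys \<and> drop (length ys - length xs) ys = xs"
  by (metis append_eq_append_conv append_take_drop_id suffix_drop suffix_length_le suffix_take)

lemma suffix_stake_iff:
  "suffix S (stake n \<omega>) \<longleftrightarrow> length S \<le> n \<and> stake (length S) (sdrop (n - length S) \<omega>) = S"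
  by (auto simp: suffix_iff_drop drop_stake)

lemma prefix_stake_iff: "prefix ys (stake n \<omega>) \<longleftrightarrow> (\<exists>t\<le>n. ys = stake t \<omega>)"
proof
  assume "prefix ys (stake n \<omega>)"
  then show "\<exists>t\<le>n. ys = stake t \<omega>"
    by (metis length_stake prefix_def prefix_length_le take_stake append_eq_conv_conj min.absorb1)
next
  assume "\<exists>t\<le>n. ys = stake t \<omega>"
  then show "prefix ys (stake n \<omega>)"
    by (metis take_is_prefix take_stake min.absorb1)
qed

lemma sublist_stake_iff: "sublist S (stake n \<omega>) \<longleftrightarrow> (\<exists>t\<le>n. suffix S (stake t \<omega>))"
  by (auto simp: sublist_altdef prefix_stake_iff)

lemma waiting_time_altdef:
  "waiting_time S \<omega> =
     (if \<exists>n. suffix S (stake n \<omega>) then of_nat (LEAST n. suffix S (stake n \<omega>)) else \<infinity>)"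
  by (simp add: waiting_time_def suffix_stake_iff)

lemma waiting_time_eq_of_nat_iff:
  "waiting_time S \<omega> = of_nat T \<longleftrightarrow> suffix S (stake T \<omega>) \<and> (\<forall>t<T. \<not> suffix S (stake t \<omega>))"
proof (cases "\<exists>n. suffix S (stake n \<omega>)")
  case True
  then show ?thesis
    by (simp add: waiting_time_altdef) (metis exists_least_iff' nat_neq_iff)
qed (auto simp: waiting_time_altdef)

lemma waiting_time_finite_iff:
  "waiting_time S \<omega> \<noteq> \<infinity> \<longleftrightarrow> (\<exists>T. waiting_time S \<omega> = of_nat T)"
  by (cases "\<exists>n. suffix S (stake n \<omega>)") (auto simp: waiting_time_altdef)

lemma length_le_waiting_time: "of_nat (length S) \<le> waiting_time S \<omega>"
  by (auto simp: waiting_time_def intro: LeastI2_ex)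

lemma not_sublist_stake_iff:
  assumes "waiting_time S \<omega> = of_nat T"
  shows "\<not> sublist S (stake n \<omega>) \<longleftrightarrow> n < T"
  using assms by (auto simp: waiting_time_eq_of_nat_iff sublist_stake_iff) (meson not_le)

lemma waiting_time_infinite_iff:
  "waiting_time S \<omega> = \<infinity> \<longleftrightarrow> (\<forall>n. \<not> sublist S (stake n \<omega>))"
  by (auto simp: waiting_time_altdef sublist_stake_iff)

lemma waiting_time_eq_suminf:
  "waiting_time S \<omega> = (\<Sum>n. of_bool (\<not> sublist S (stake n \<omega>)))"
proof (cases "waiting_time S \<omega> = \<infinity>")
  case True
  then have "(\<Sum>n. of_bool (\<not> sublist S (stake n \<omega>)) :: ennreal) = (\<Sum>n. 1)"
    unfolding waiting_time_infinite_iff by simp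
  also have "\<dots> = \<infinity>"
    using suminf_eq_SUP[of "\<lambda>_. 1 :: ennreal"] ennreal_SUP_of_nat_eq_top by simp
  finally show ?thesis
    using True by simp
next
  case False
  then obtain T where T: "waiting_time S \<omega> = of_nat T"
    using waiting_time_finite_iff by blast
  then have "(\<Sum>n. of_bool (\<not> sublist S (stake n \<omega>)) :: ennreal) = (\<Sum>n<T. 1)"
    by (subst suminf_finite[of "{..<T}"]) (auto simp: not_sublist_stake_iff)
  then show ?thesis
    using T by simp
qed

(* Describes the event by the first t rolls alone, making it independent of the later ones. *)
lemma waiting_time_eq_of_nat_iff_stake:
  assumes "S \<noteq> []"
  shows "waiting_time S \<omega> = of_nat t
           \<longleftrightarrow> suffix S (stake t \<omega>) \<and> \<not> sublist S (butlast (stake t \<omega>))"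
proof (cases t)
  case 0
  then show ?thesis
    using assms waiting_time_eq_of_nat_iff[of S \<omega> 0] by simp
next
  case (Suc t')
  have "butlast (stake t \<omega>) = stake t' \<omega>"
    unfolding Suc stake_Suc by simp
  moreover have "(\<forall>t''<t. \<not> suffix S (stake t'' \<omega>)) \<longleftrightarrow> \<not> sublist S (stake t' \<omega>)"
    unfolding sublist_stake_iff Suc less_Suc_eq_le by blast
  ultimately show ?thesis
    by (simp only: waiting_time_eq_of_nat_iff)
qed

lemma borel_measurable_waiting_time [measurable]:
  "waiting_time S \<in> borel_measurable (stream_space (count_space UNIV))"
proof -
  have "waiting_time S = (\<lambda>\<omega>. \<Sum>n. of_bool (\<not> sublist S (stake n \<omega>)))"
    by (intro ext) (rule waiting_time_eq_suminf)
  then show ?thesis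
    by (simp add: borel_measurable_suminf)
qed

lemma waiting_time_in_sets:
  assumes "A \<in> sets borel"
  shows "{\<omega>. waiting_time S \<omega> \<in> A} \<in> sets (rolls D)"
proof -
  have "waiting_time S -` A \<inter> space (stream_space (count_space UNIV))
      \<in> sets (stream_space (count_space UNIV))"
    by (rule measurable_sets[OF borel_measurable_waiting_time assms])
  then show ?thesis
    by (simp add: sets_rolls vimage_def space_stream_space)
qed

lemma waiting_time_eq_in_sets: "{\<omega>. waiting_time S \<omega> = c} \<in> sets (rolls D)"
  using waiting_time_in_sets[of "{c}"] by simp

section \<open>Overlaps\<close>

lemma take_in_overlaps:
  assumes "0 < j" "j \<le> length S" "take j S = drop (length S - j) S"
  shows "take j S \<in> overlaps S"
proof -
  have "take j S \<noteq> []"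
    using assms by auto
  moreover have "suffix (take j S) S"
    unfolding assms(3) by (rule suffix_drop)
  ultimately show ?thesis
    unfolding overlaps_def by (simp add: take_is_prefix)
qed

lemma overlapsD:
  assumes "w \<in> overlaps S"
  shows "0 < length w" "length w \<le> length S"
    and "take (length w) S = w" "drop (length S - length w) S = w"
  using assms unfolding overlaps_def
  by (auto simp: suffix_iff_drop prefix_length_le prefix_def)

lemma finite_overlaps: "finite (overlaps S)"
proof (rule finite_subset)
  show "overlaps S \<subseteq> set (prefixes S)"
    by (auto simp: overlaps_def)
qed simp

lemma self_in_overlaps: "S \<noteq> [] \<Longrightarrow> S \<in> overlaps S"
  by (simp add: overlaps_def)

lemma inj_on_length_overlaps: "inj_on length (overlaps S)"
proof (rule inj_onI)
  fix w w' assume w: "w \<in> overlaps S" and w': "w' \<in> overlaps S" and "length w = length w'"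
  then have "take (length w) S = take (length w') S"
    by simp
  then show "w = w'"
    by (simp only: overlapsD(3)[OF w] overlapsD(3)[OF w'])
qed

lemma length_overlaps_subset: "length ` overlaps S \<subseteq> {1..length S}"
proof (rule image_subsetI)
  fix w assume "w \<in> overlaps S"
  then show "length w \<in> {1..length S}"
    using overlapsD(1,2)[of w S] by (simp add: Suc_le_eq)
qed

lemma overlaps_replicate: "overlaps (replicate k x) = (\<lambda>j. replicate j x) ` {1..k}"
proof (intro equalityI subsetI)
  fix w assume w: "w \<in> overlaps (replicate k x)"
  then have "w = replicate (length w) x"
    using overlapsD(2,3)[OF w] by (simp add: min.absorb1)
  then show "w \<in> (\<lambda>j. replicate j x) ` {1..k}"
    by (rule image_eqI) (use overlapsD(1,2)[OF w] in \<open>simp add: Suc_le_eq\<close>)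
next
  fix w assume "w \<in> (\<lambda>j. replicate j x) ` {1..k}"
  then obtain j where j: "j \<in> {1..k}" "w = replicate j x"
    by blast
  then have "take j (replicate k x) \<in> overlaps (replicate k x)"
    by (intro take_in_overlaps) auto
  then show "w \<in> overlaps (replicate k x)"
    using j by simp
qed

lemma overlaps_singleton: "overlaps [x] = {[x]}"
  by (auto simp: overlaps_def prefix_Cons)

lemma count_list_replicate: "count_list (replicate n z) x = (if z = x then n else 0)"
  by (induction n) auto

lemma overlaps_two_runs:
  assumes "x \<noteq> y" "0 < a" "0 < b"
  shows "overlaps (replicate a x @ replicate b y) = {replicate a x @ replicate b y}"
    (is "overlaps ?S = {?S}")
proof -
  have "w = ?S" if w: "w \<in> overlaps ?S" for w
  proof -
    (* w ends with y, so it contains the whole run of x; the part u in front of it then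
       has no x, although it would start with x if it were nonempty. *)
    obtain u where u: "?S = u @ w"
      using w by (auto simp: overlaps_def suffix_def)
    have "w \<noteq> []" and prefix: "take (length w) ?S = w"
      using overlapsD[OF w] by auto
    have "last w = last ?S"
      unfolding u using \<open>w \<noteq> []\<close> by simp
    also have "\<dots> = y"
      using assms(3) by simp
    finally have "last w = y" .
    have "a < length w"
    proof (rule ccontr)
      assume "\<not> a < length w"
      then have "w = replicate (length w) x"
        using prefix by (simp add: take_append)
      then have "last w = x"
        using \<open>w \<noteq> []\<close> by (metis last_replicate length_0_conv)
      then show False
        using \<open>last w = y\<close> assms(1) by simp
    qed
    then have "count_list (take (length w) ?S) x = a"
      using assms(1) overlapsD(2)[OF w] by (simp add: take_append count_list_replicate)
    with prefix have "count_list w x = a"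
      by simp
    then have "x \<notin> set u"
      using arg_cong[OF u, of "\<lambda>xs. count_list xs x"] assms(1)
      by (simp add: count_list_replicate count_list_0_iff)
    then show "w = ?S"
      using u assms(2) by (cases u; cases a) auto
  qed
  then show ?thesis
    using assms by (auto simp: self_in_overlaps)
qed

section \<open>Conway's formula\<close>

lemma first_occurrence_overlaps_window:
  assumes none: "\<not> sublist S (stake n \<omega>)" and window: "stake (length S) (sdrop n \<omega>) = S"
  shows "\<exists>w\<in>overlaps S. waiting_time S \<omega> = of_nat (n + length w)
           \<and> stake (length S - length w) (sdrop (n + length w) \<omega>) = drop (length w) S"
proof -
  define k where "k = length S"
  have window': "stake k (sdrop n \<omega>) = S"
    using window by (simp add: k_def)
  have occ_end: "suffix S (stake (n + k) \<omega>)"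
    using window by (simp add: suffix_stake_iff k_def)
  then have ex: "\<exists>t. suffix S (stake t \<omega>)" ..
  define T where "T = (LEAST t. suffix S (stake t \<omega>))"
  have T: "waiting_time S \<omega> = of_nat T"
    by (simp add: waiting_time_altdef ex T_def)
  have "T \<le> n + k"
    unfolding T_def using occ_end by (rule Least_le)
  have "n < T"
    using none not_sublist_stake_iff[OF T] by blast
  have occ: "stake k (sdrop (T - k) \<omega>) = S" "k \<le> T"
    using T by (auto simp: waiting_time_eq_of_nat_iff suffix_stake_iff k_def)
  define j where "j = T - n"
  have j: "0 < j" "j \<le> k"
    using \<open>n < T\<close> \<open>T \<le> n + k\<close> by (auto simp: j_def)
  have "take j S = stake j (sdrop n \<omega>)"
    using j by (simp add: take_stake flip: window')
  also have "\<dots> = drop (k - j) S"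
    using occ j \<open>n < T\<close> by (simp add: drop_stake j_def flip: occ(1))
  finally have "take j S \<in> overlaps S"
    using j take_in_overlaps[of j S] by (simp add: k_def)
  moreover have "drop j S = stake (k - j) (sdrop (n + j) \<omega>)"
    by (simp add: drop_stake flip: window')
  ultimately show ?thesis
    using T j \<open>n < T\<close> by (intro bexI[of _ "take j S"]) (auto simp: j_def k_def)
qed

lemma window_of_first_occurrence_overlap:
  assumes w: "w \<in> overlaps S"
    and first: "waiting_time S \<omega> = of_nat (n + length w)"
    and rest: "stake (length S - length w) (sdrop (n + length w) \<omega>) = drop (length w) S"
  shows "\<not> sublist S (stake n \<omega>) \<and> stake (length S) (sdrop n \<omega>) = S"
proof
  show "\<not> sublist S (stake n \<omega>)"
    using not_sublist_stake_iff[OF first] overlapsD(1)[OF w] by simp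
  define k j where "k = length S" and "j = length w"
  have j: "0 < j" "j \<le> k"
    using overlapsD[OF w] by (simp_all add: j_def k_def)
  have occ: "stake k (sdrop (n + j - k) \<omega>) = S" "k \<le> n + j"
    using first[unfolded waiting_time_eq_of_nat_iff suffix_stake_iff] by (simp_all add: k_def j_def)
  have "stake k (sdrop n \<omega>) = stake j (sdrop n \<omega>) @ stake (k - j) (sdrop (n + j) \<omega>)"
    using stake_add[of j "sdrop n \<omega>" "k - j"] j by (simp add: add.commute)
  also have "stake j (sdrop n \<omega>) = drop (k - j) S"
    using occ j by (simp add: drop_stake flip: occ(1))
  also have "\<dots> = take j S"
    using overlapsD(3,4)[OF w] by (simp add: j_def k_def)
  finally show "stake (length S) (sdrop n \<omega>) = S"
    using rest by (simp add: j_def k_def)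
qed

lemma of_bool_window_eq_sum_overlaps:
  "of_bool (\<not> sublist S (stake n \<omega>) \<and> stake (length S) (sdrop n \<omega>) = S)
   = (\<Sum>w\<in>overlaps S. of_bool (waiting_time S \<omega> = of_nat (n + length w)
        \<and> stake (length S - length w) (sdrop (n + length w) \<omega>) = drop (length w) S) :: ennreal)"
  (is "of_bool ?window = (\<Sum>w\<in>overlaps S. of_bool (?first w))")
proof (cases ?window)
  case True
  then obtain w0 where w0: "w0 \<in> overlaps S" "?first w0"
    using first_occurrence_overlaps_window by blast
  have "w = w0" if "w \<in> overlaps S" "?first w" for w
    using that w0 overlapsD(3) by (metis add_left_cancel of_nat_eq_iff)
  then have "overlaps S \<inter> {w. ?first w} = {w0}"
    using w0 by blast
  then show ?thesis
    using True by (simp add: finite_overlaps)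
next
  case False
  then have "overlaps S \<inter> {w. ?first w} = {}"
    using window_of_first_occurrence_overlap by blast
  then show ?thesis
    using False by (simp add: finite_overlaps)
qed

lemma nn_integral_first_occurrence_then_word:
  assumes "S \<noteq> []"
  shows "(\<integral>\<^sup>+\<omega>. of_bool (waiting_time S \<omega> = of_nat t)
              * of_bool (stake (length ys) (sdrop t \<omega>) = ys) \<partial>rolls D)
       = emeasure (rolls D) {\<omega>. waiting_time S \<omega> = of_nat t} * word_prob D ys"
proof -
  define first where "first xs \<longleftrightarrow> suffix S xs \<and> \<not> sublist S (butlast xs)" for xs
  have first: "of_bool (waiting_time S \<omega> = of_nat t) = (of_bool (first (stake t \<omega>)) :: ennreal)"
    for \<omega>
    using assms by (simp add: waiting_time_eq_of_nat_iff_stake first_def)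
  have "(\<integral>\<^sup>+\<omega>. of_bool (first (stake t \<omega>))
          * of_bool (stake (length ys) (sdrop t \<omega>) = ys) \<partial>rolls D)
      = (\<integral>\<^sup>+\<omega>. of_bool (first (stake t \<omega>)) \<partial>rolls D) * word_prob D ys"
    by (subst nn_integral_stake_sdrop[where f = "\<lambda>xs. of_bool (first xs)"
          and g = "\<lambda>\<omega>. of_bool (stake (length ys) \<omega> = ys)"])
       (simp_all add: nn_integral_stake_eq)
  also have "(\<integral>\<^sup>+\<omega>. of_bool (first (stake t \<omega>)) \<partial>rolls D)
      = (\<integral>\<^sup>+\<omega>. indicator {\<omega>. waiting_time S \<omega> = of_nat t} \<omega> \<partial>rolls D)"
    by (simp add: indicator_def flip: first)
  also have "\<dots> = emeasure (rolls D) {\<omega>. waiting_time S \<omega> = of_nat t}"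
    by (rule nn_integral_indicator) (rule waiting_time_eq_in_sets)
  finally show ?thesis
    by (simp only: first)
qed

lemma suminf_emeasure_waiting_time_eq:
  assumes "j \<le> length S"
  shows "(\<Sum>n. emeasure (rolls D) {\<omega>. waiting_time S \<omega> = of_nat (n + j)})
       = emeasure (rolls D) {\<omega>. waiting_time S \<omega> \<noteq> \<infinity>}"
proof -
  have "(\<Union>n. {\<omega>. waiting_time S \<omega> = of_nat (n + j)}) = {\<omega>. waiting_time S \<omega> \<noteq> \<infinity>}"
  proof safe
    fix \<omega> assume "waiting_time S \<omega> \<noteq> \<infinity>"
    then obtain T where T: "waiting_time S \<omega> = of_nat T"
      using waiting_time_finite_iff by blast
    then have "j \<le> T"
      using length_le_waiting_time[of S \<omega>] assms by simp
    with T show "\<omega> \<in> (\<Union>n. {\<omega>. waiting_time S \<omega> = of_nat (n + j)})"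
      by (intro UN_I[of "T - j"]) auto
  qed (auto simp del: of_nat_add)
  moreover have "disjoint_family (\<lambda>n. {\<omega>. waiting_time S \<omega> = of_nat (n + j)})"
    by (auto simp: disjoint_family_on_def)
  ultimately show ?thesis
    by (subst suminf_emeasure) (auto simp del: of_nat_add intro: waiting_time_eq_in_sets)
qed

lemma expected_wait_mult_word_prob:
  "expected_wait D S * word_prob D S
   = emeasure (rolls D) {\<omega>. waiting_time S \<omega> \<noteq> \<infinity>}
     * (\<Sum>w\<in>overlaps S. ennreal (word_prob D (drop (length w) S)))"
proof (cases "S = []")
  case True
  then have "waiting_time S \<omega> = 0" for \<omega>
    using waiting_time_eq_of_nat_iff[of S \<omega> 0] by simp
  then show ?thesis
    using True by (simp add: expected_wait_def overlaps_def)
next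
  case False
  define c where "c = emeasure (rolls D) {\<omega>. waiting_time S \<omega> \<noteq> \<infinity>}"
  have [measurable]:
    "(\<lambda>\<omega>. of_bool (stake m (sdrop t \<omega>) = ys) :: ennreal) \<in> borel_measurable (rolls D)"
    for m t and ys :: "nat list"
    by measurable
  have [measurable]:
    "(\<lambda>\<omega>. of_bool (waiting_time S \<omega> = x) :: ennreal) \<in> borel_measurable (rolls D)" for x
    by measurable
  have window: "(\<integral>\<^sup>+\<omega>. of_bool (\<not> sublist S (stake n \<omega>)) \<partial>rolls D) * word_prob D S
      = (\<integral>\<^sup>+\<omega>. of_bool (\<not> sublist S (stake n \<omega>) \<and> stake (length S) (sdrop n \<omega>) = S) \<partial>rolls D)"
    for n
    using nn_integral_stake_sdrop[where f = "\<lambda>xs. of_bool (\<not> sublist S xs)"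
        and g = "\<lambda>\<omega>. of_bool (stake (length S) \<omega> = S)" and n = n and D = D]
    by (simp add: nn_integral_stake_eq of_bool_conj)
  have "expected_wait D S * word_prob D S
      = (\<Sum>n. (\<integral>\<^sup>+\<omega>. of_bool (\<not> sublist S (stake n \<omega>)) \<partial>rolls D) * word_prob D S)"
    by (simp add: expected_wait_def waiting_time_eq_suminf nn_integral_suminf)
  also have "\<dots> = (\<Sum>n. \<Sum>w\<in>overlaps S. \<integral>\<^sup>+\<omega>.
        of_bool (waiting_time S \<omega> = of_nat (n + length w)
          \<and> stake (length S - length w) (sdrop (n + length w) \<omega>) = drop (length w) S) \<partial>rolls D)"
    by (simp only: window of_bool_window_eq_sum_overlaps,
        intro arg_cong[where f = suminf] ext nn_integral_sum) measurable
  also have "\<dots> = (\<Sum>n. \<Sum>w\<in>overlaps S. \<integral>\<^sup>+\<omega>.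
        of_bool (waiting_time S \<omega> = of_nat (n + length w))
          * of_bool (stake (length (drop (length w) S)) (sdrop (n + length w) \<omega>) = drop (length w) S)
        \<partial>rolls D)"
    by (simp only: of_bool_conj length_drop)
  also have "\<dots> = (\<Sum>n. \<Sum>w\<in>overlaps S.
        emeasure (rolls D) {\<omega>. waiting_time S \<omega> = of_nat (n + length w)}
          * word_prob D (drop (length w) S))"
    by (simp only: nn_integral_first_occurrence_then_word[OF False])
  also have "\<dots> = (\<Sum>w\<in>overlaps S. c * word_prob D (drop (length w) S))"
    using suminf_emeasure_waiting_time_eq[OF overlapsD(2)]
    by (simp add: suminf_sum c_def del: of_nat_add)
  finally show ?thesis
    by (simp add: c_def sum_distrib_left)
qed

lemma sum_overlaps_inverse_word_prob:
  assumes pos: "\<forall>x\<in>set S. 0 < pmf D x"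
  shows "(\<Sum>w\<in>overlaps S. 1 / word_prob D w) * word_prob D S
       = (\<Sum>w\<in>overlaps S. word_prob D (drop (length w) S))"
  unfolding sum_distrib_right
proof (rule sum.cong)
  fix w assume w: "w \<in> overlaps S"
  then have "word_prob D S = word_prob D w * word_prob D (drop (length w) S)"
    by (metis overlapsD(3) append_take_drop_id map_append prod_list.append)
  moreover have "0 < word_prob D w"
    using pos w by (intro word_prob_pos) (metis overlapsD(3) in_set_takeD)
  ultimately show "1 / word_prob D w * word_prob D S = word_prob D (drop (length w) S)"
    by simp
qed simp

lemma emeasure_waiting_time_finite:
  assumes "expected_wait D S \<noteq> \<infinity>"
  shows "emeasure (rolls D) {\<omega>. waiting_time S \<omega> \<noteq> \<infinity>} = 1"
proof -
  have "AE \<omega> in rolls D. waiting_time S \<omega> \<noteq> \<infinity>"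
    using assms unfolding expected_wait_def by (intro nn_integral_PInf_AE) measurable
  moreover have "{\<omega>. waiting_time S \<omega> \<noteq> \<infinity>} \<in> sets (rolls D)"
    using waiting_time_in_sets[of "- {\<infinity>}"] by simp
  ultimately show ?thesis
    by (intro prob_space.emeasure_eq_1_AE[OF prob_space_rolls]) auto
qed

theorem expected_wait_eq_sum_overlaps:
  assumes pos: "\<forall>x\<in>set S. 0 < pmf D x"
  shows "expected_wait D S = ennreal (\<Sum>w\<in>overlaps S. 1 / word_prob D w)"
proof -
  define c where "c = emeasure (rolls D) {\<omega>. waiting_time S \<omega> \<noteq> \<infinity>}"
  define R where "R = (\<Sum>w\<in>overlaps S. 1 / word_prob D w)"
  have PS: "0 < word_prob D S"
    using pos by (rule word_prob_pos)
  have "ennreal R * word_prob D S = ennreal (R * word_prob D S)"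
    using PS by (simp add: ennreal_mult'')
  also have "\<dots> = (\<Sum>w\<in>overlaps S. ennreal (word_prob D (drop (length w) S)))"
    unfolding R_def sum_overlaps_inverse_word_prob[OF pos]
    by (rule sum_ennreal[symmetric]) (rule word_prob_nonneg)
  finally have key: "expected_wait D S * word_prob D S = c * (ennreal R * word_prob D S)"
    using expected_wait_mult_word_prob[of D S] by (simp add: c_def)
  have "c \<le> 1"
    unfolding c_def by (rule prob_space.emeasure_le_1[OF prob_space_rolls])
  then have "c * (ennreal R * word_prob D S) \<noteq> \<infinity>"
    by (auto simp: ennreal_mult_eq_top_iff top_unique)
  then have "expected_wait D S * word_prob D S \<noteq> \<infinity>"
    using key by simp
  then have "c = 1"
    using PS emeasure_waiting_time_finite unfolding c_def by (auto simp: ennreal_mult_eq_top_iff)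
  then have "expected_wait D S * word_prob D S = ennreal R * word_prob D S"
    using key by simp
  then show ?thesis
    using PS unfolding R_def
    by (metis ennreal_mult_divide_eq ennreal_eq_0_iff ennreal_neq_top not_le)
qed

section \<open>Extremal waiting times\<close>

lemma finite_words: "finite (words m k)"
proof -
  have "words m k = {xs. set xs \<subseteq> {1..m} \<and> length xs = k}"
    by (auto simp: words_def)
  then show ?thesis
    by (simp add: finite_lists_length_eq)
qed

lemma word_prob_const: "\<forall>x\<in>set ys. pmf D x = q \<Longrightarrow> word_prob D ys = q ^ length ys"
  by (induction ys) auto

lemma power_length_le_word_prob:
  assumes "0 \<le> p" "\<forall>x\<in>set ys. p \<le> pmf D x"
  shows "p ^ length ys \<le> word_prob D ys"
  using assms(2) by (induction ys) (auto intro!: mult_mono simp: assms(1))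

lemma expected_wait_le_sum_inverse_powers:
  assumes p: "0 < p" "\<forall>x\<in>set S. p \<le> pmf D x"
  shows "expected_wait D S \<le> ennreal (\<Sum>j=1..length S. 1 / p ^ j)"
proof -
  have "(\<Sum>w\<in>overlaps S. 1 / word_prob D w) \<le> (\<Sum>w\<in>overlaps S. 1 / p ^ length w)"
  proof (rule sum_mono)
    fix w assume "w \<in> overlaps S"
    then have "\<forall>x\<in>set w. p \<le> pmf D x"
      using p(2) overlapsD(3) by (metis in_set_takeD)
    then have "p ^ length w \<le> word_prob D w"
      using p(1) by (intro power_length_le_word_prob) auto
    moreover have "0 < p ^ length w"
      using p(1) by simp
    ultimately show "1 / word_prob D w \<le> 1 / p ^ length w"
      by (intro divide_left_mono) (simp_all add: zero_less_mult_iff)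
  qed
  also have "\<dots> = (\<Sum>j\<in>length ` overlaps S. 1 / p ^ j)"
    by (simp add: sum.reindex[OF inj_on_length_overlaps])
  also have "\<dots> \<le> (\<Sum>j=1..length S. 1 / p ^ j)"
    using length_overlaps_subset p(1) by (intro sum_mono2) auto
  finally show ?thesis
    using p by (subst expected_wait_eq_sum_overlaps) (auto intro: ennreal_leI)
qed

lemma expected_wait_replicate:
  assumes "0 < pmf D x"
  shows "expected_wait D (replicate k x) = ennreal (\<Sum>j=1..k. 1 / pmf D x ^ j)"
proof -
  have "expected_wait D (replicate k x)
      = ennreal (\<Sum>w\<in>(\<lambda>j. replicate j x) ` {1..k}. 1 / word_prob D w)"
    using assms by (simp add: expected_wait_eq_sum_overlaps overlaps_replicate)
  also have "\<dots> = ennreal (\<Sum>j=1..k. 1 / pmf D x ^ j)"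
    by (subst sum.reindex) (auto simp: inj_on_def prod_list_replicate)
  finally show ?thesis .
qed

lemma Max_expected_wait_words:
  assumes i: "i \<in> {1..m}" "0 < pmf D i" "\<forall>j\<in>{1..m}. pmf D i \<le> pmf D j"
  shows "Max (expected_wait D ` words m k) = expected_wait D (replicate k i)"
proof (rule Max_eqI)
  show "finite (expected_wait D ` words m k)"
    by (simp add: finite_words)
  show "expected_wait D (replicate k i) \<in> expected_wait D ` words m k"
    using i(1) by (intro imageI) (auto simp: words_def)
  fix e assume "e \<in> expected_wait D ` words m k"
  then obtain S where S: "length S = k" "set S \<subseteq> {1..m}" "e = expected_wait D S"
    by (auto simp: words_def)
  then have "e \<le> ennreal (\<Sum>j=1..k. 1 / pmf D i ^ j)"
    using i expected_wait_le_sum_inverse_powers[of "pmf D i" S D] by auto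
  then show "e \<le> expected_wait D (replicate k i)"
    using i(2) by (simp add: expected_wait_replicate)
qed

lemma expected_wait_uniform:
  assumes "0 < m" "\<forall>x\<in>set S. pmf D x = 1 / real m"
  shows "expected_wait D S = ennreal (\<Sum>w\<in>overlaps S. real m ^ length w)"
proof -
  have "word_prob D w = (1 / real m) ^ length w" if "w \<in> overlaps S" for w
    using assms(2) overlapsD(3)[OF that] by (metis in_set_takeD word_prob_const)
  then show ?thesis
    using assms by (simp add: expected_wait_eq_sum_overlaps power_one_over)
qed

lemma expected_wait_uniform_ge:
  assumes "0 < m" "\<forall>x\<in>set S. pmf D x = 1 / real m" "S \<noteq> []"
  shows "of_nat (m ^ length S) \<le> expected_wait D S"
proof -
  have "real m ^ length S \<le> (\<Sum>w\<in>overlaps S. real m ^ length w)"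
    using assms(3) by (intro member_le_sum[of S]) (auto simp: self_in_overlaps finite_overlaps)
  then show ?thesis
    using assms by (simp add: expected_wait_uniform ennreal_of_nat_eq_real_of_nat ennreal_leI)
qed

lemma expected_wait_uniform_unbordered:
  assumes "0 < m" "\<forall>x\<in>set S. pmf D x = 1 / real m" "overlaps S = {S}"
  shows "expected_wait D S = of_nat (m ^ length S)"
  using assms by (simp add: expected_wait_uniform ennreal_of_nat_eq_real_of_nat)

lemma exists_unbordered_word:
  assumes "1 < m" "0 < k"
  obtains S where "S \<in> words m k" "overlaps S = {S}"
proof (cases "k = 1")
  case True
  then show ?thesis
    using that[of "[1]"] assms by (auto simp: words_def overlaps_singleton)
next
  case False
  have "overlaps (replicate (k - 1) 1 @ replicate 1 2)
      = {replicate (k - 1) (1::nat) @ replicate 1 2}"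
    using False assms(2) by (intro overlaps_two_runs) auto
  moreover have "replicate (k - 1) 1 @ replicate 1 2 \<in> words m k"
    using False assms by (auto simp: words_def)
  ultimately show ?thesis
    using that by blast
qed

lemma Min_expected_wait_words_uniform:
  assumes "1 < m" "0 < k" "\<forall>j\<in>{1..m}. pmf D j = 1 / real m"
  shows "Min (expected_wait D ` words m k) = of_nat (m ^ k)"
proof (rule Min_eqI)
  show "finite (expected_wait D ` words m k)"
    by (simp add: finite_words)
  have uniform: "\<forall>x\<in>set S. pmf D x = 1 / real m" if "S \<in> words m k" for S
    using that assms(3) by (auto simp: words_def)
  obtain S where S: "S \<in> words m k" "overlaps S = {S}"
    using assms(1,2) by (rule exists_unbordered_word)
  then have "expected_wait D S = of_nat (m ^ k)"
    using assms(1) uniform[OF S(1)] expected_wait_uniform_unbordered[of m S D]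
    by (simp add: words_def)
  then show "of_nat (m ^ k) \<in> expected_wait D ` words m k"
    using S(1) by (metis image_eqI)
  fix e assume "e \<in> expected_wait D ` words m k"
  then obtain S where "S \<in> words m k" "e = expected_wait D S"
    by blast
  then show "of_nat (m ^ k) \<le> e"
    using assms(1,2) uniform expected_wait_uniform_ge[of m S D] by (auto simp: words_def)
qed

lemma pmf_const_eq_inverse_card:
  assumes "set_pmf D \<subseteq> A" "finite A" "\<forall>x\<in>A. pmf D x = q"
  shows "q = 1 / real (card A)"
proof -
  have "1 = (\<Sum>x\<in>A. pmf D x)"
    using assms(1,2) by (simp add: sum_pmf_eq_1)
  also have "\<dots> = real (card A) * q"
    using assms(3) by simp
  finally show ?thesis
    by (cases "card A = 0") (simp_all add: field_simps)
qed

lemma sum_inverse_powers: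
  fixes p :: real
  assumes "p \<noteq> 0" "p \<noteq> 1"
  shows "(\<Sum>j=1..k. 1 / p ^ j) = (1 - p ^ k) / ((1 - p) * p ^ k)"
proof (induction k)
  case (Suc k)
  have "(\<Sum>j=1..Suc k. 1 / p ^ j) = (1 - p ^ k) / ((1 - p) * p ^ k) + 1 / p ^ Suc k"
    using Suc by simp
  also have "\<dots> = (1 - p ^ Suc k) / ((1 - p) * p ^ Suc k)"
    using assms by (simp add: field_simps)
  finally show ?case .
qed simp

theorem corollary4p5:
  fixes D :: "nat pmf" and m k :: nat
  assumes m: "m \<ge> 1" and k: "k \<ge> 1"
    and supp: "set_pmf D \<subseteq> {1..m}"
  shows
    "((\<forall>j\<in>{1..m}. pmf D j > 0) \<longrightarrow>
       (let p = Min (pmf D ` {1..m}) in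
         Max (expected_wait D ` words m k) = ennreal (\<Sum>j=1..k. 1 / p ^ j)
         \<and> (p \<noteq> 1 \<longrightarrow> (\<Sum>j=1..k. 1 / p ^ j) = (1 - p ^ k) / ((1 - p) * p ^ k))
         \<and> (\<forall>i\<in>{1..m}. pmf D i = p \<longrightarrow>
               expected_wait D (replicate k i) = Max (expected_wait D ` words m k))))
     \<and>
     ((m > 1 \<and> (\<forall>j\<in>{1..m}. pmf D j = pmf D 1)) \<longrightarrow>
       Min (expected_wait D ` words m k) = of_nat (m ^ k)
       \<and> (\<forall>S\<in>words m k. overlaps S = {S} \<longrightarrow> expected_wait D S = of_nat (m ^ k))
       \<and> (\<forall>x\<in>{1..m}. \<forall>y\<in>{1..m}. \<forall>a b. x \<noteq> y \<and> a \<ge> 1 \<and> b \<ge> 1 \<and> a + b = k \<longrightarrow>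
             overlaps (replicate a x @ replicate b y) = {replicate a x @ replicate b y}))"
proof ((rule conjI; intro impI), goal_cases)
  case 1
  define p where "p = Min (pmf D ` {1..m})"
  have "p \<in> pmf D ` {1..m}"
    unfolding p_def using m by (intro Min_in) auto
  then obtain i where i: "i \<in> {1..m}" "pmf D i = p"
    by auto
  have Max: "Max (expected_wait D ` words m k) = expected_wait D (replicate k i')"
    if "i' \<in> {1..m}" "pmf D i' = p" for i'
    using that 1 by (intro Max_expected_wait_words) (auto simp: p_def)
  have "0 < p"
    using 1 i by auto
  show ?case
    unfolding Let_def p_def[symmetric]
  proof (intro conjI impI ballI)
    show "Max (expected_wait D ` words m k) = ennreal (\<Sum>j=1..k. 1 / p ^ j)"
      using Max[OF i] expected_wait_replicate[of D i k] i \<open>0 < p\<close> by simp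
  qed (use Max sum_inverse_powers[of p k] \<open>0 < p\<close> in simp_all)
next
  case 2
  then have "1 < m" and const: "\<forall>j\<in>{1..m}. pmf D j = pmf D 1"
    by blast+
  have "pmf D 1 = 1 / real m"
    using pmf_const_eq_inverse_card[OF supp _ const] by simp
  then have uniform: "\<forall>j\<in>{1..m}. pmf D j = 1 / real m"
    using const by metis
  show ?case
  proof (intro conjI ballI allI impI)
    show "Min (expected_wait D ` words m k) = of_nat (m ^ k)"
      using \<open>1 < m\<close> k uniform by (intro Min_expected_wait_words_uniform) auto
    show "expected_wait D S = of_nat (m ^ k)" if "S \<in> words m k" "overlaps S = {S}" for S
      using that \<open>1 < m\<close> uniform expected_wait_uniform_unbordered[of m S D]
      by (auto simp: words_def)
  qed (rule overlaps_two_runs; simp)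
qed

end
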